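(* Let $n\in\mathbb{N}$. Then: (i) $\|x\|_n=\sup\{\langle x\xi,\xi\rangle\colon \xi\in s',\ |\xi|_n'\leqslant 1\}$ for every positive $x\in\mathcal{S}$; (ii) $\|x\|_n^2\leqslant\|x^2\|_{2n}$ for every self-adjoint $x\in\mathcal{S}$; (iii) $\|x\|_n^2\leqslant\|x^*x\|_{2n}^{1/2}\,\|xx^*\|_{2n}^{1/2}$ for every $x\in\mathcal{S}$. Moreover, inequalities (ii) and (iii) are sharp, i.e. there exist nonzero (self-adjoint) $x\in\mathcal{S}$ for which equality holds in (ii) and in (iii).
   Context: Let $\mathbb{N}=\{1,2,\dots\}$. Let $s$ be the space of complex sequences $\xi=(\xi_j)_{j\geqslant1}$ with $|\xi|_n:=(\sum_{j}|\xi_j|^2j^{2n})^{1/2}<\infty$ for all $n\in\mathbb{N}$ (a Fréchet space with these norms), and let $s'$ be its dual, the space of sequences $\eta$ with $|\eta|_n':=(\sum_j|\eta_j|^2j^{-2n})^{1/2}<\infty$ for some $n$, with pairing $\langle\xi,\eta\rangle=\sum_j\xi_j\overline{\eta_j}$. The noncommutative Schwartz space $\mathcal{S}=L(s',s)$ is the space of continuous linear operators $s'\to s$ with the topology of uniform convergence on bounded sets; it is a $*$-algebra with product $xy:=x\circ\iota\circ y$ ($\iota\colon s\hookrightarrow s'$ the inclusion) and involution given by $\langle x^*\xi,\eta\rangle=\langle\xi,x\eta\rangle$. Via $s\subset\ell_2\subset s'$ each $x\in\mathcal{S}$ is a bounded operator on $\ell_2$, compatibly with products and adjoints. An element $x\in\mathcal{S}$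 is positive if $x=y^*y$ for some $y\in\mathcal{S}$ (equivalently $\langle x\xi,\xi\rangle\geqslant0$ for all $\xi\in s'$). For $n\in\mathbb{N}$ and $x\in\mathcal{S}$, $\|x\|_n:=\sup\{|x\xi|_n\colon \xi\in s',\ |\xi|_n'\leqslant1\}$; equivalently $\|x\|_n=\|d_nxd_n\|_{\mathcal{B}(\ell_2)}$ where $d_n=\operatorname{diag}(1^n,2^n,3^n,\dots)$. *)

theory Defs
  imports Complex_Main
begin

text \<open>Sequences xi = (xi_j)_{j>=1} are represented as functions nat => complex,
  where the component with index k :: nat stands for xi_{k+1}; hence the
  weight j is written real (Suc k).\<close>

type_synonym cseq = "nat \<Rightarrow> complex"


definition s_fin :: "nat \<Rightarrow> cseq \<Rightarrow> bool" where
  "s_fin n \<xi> \<longleftrightarrow> summable (\<lambda>k. (cmod (\<xi> k))\<^sup>2 * real (Suc k) ^ (2 * n))"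

definition sd_fin :: "nat \<Rightarrow> cseq \<Rightarrow> bool" where
  "sd_fin n \<xi> \<longleftrightarrow> summable (\<lambda>k. (cmod (\<xi> k))\<^sup>2 / real (Suc k) ^ (2 * n))"

definition s_norm :: "nat \<Rightarrow> cseq \<Rightarrow> real" where
  "s_norm n \<xi> = sqrt (\<Sum>k. (cmod (\<xi> k))\<^sup>2 * real (Suc k) ^ (2 * n))"

definition sd_norm :: "nat \<Rightarrow> cseq \<Rightarrow> real" where
  "sd_norm n \<xi> = sqrt (\<Sum>k. (cmod (\<xi> k))\<^sup>2 / real (Suc k) ^ (2 * n))"

definition s_space :: "cseq set" where
  "s_space = {\<xi>. \<forall>n\<ge>1. s_fin n \<xi>}"

definition sd_space :: "cseq set" where
  "sd_space = {\<xi>. \<exists>n\<ge>1. sd_fin n \<xi>}"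

definition pair :: "cseq \<Rightarrow> cseq \<Rightarrow> complex" where
  "pair \<xi> \<eta> = (\<Sum>k. \<xi> k * cnj (\<eta> k))"

text \<open>The noncommutative Schwartz space S = L(s', s): linear maps s' -> s that are
  continuous, s' carrying its (strong dual = inductive limit) topology, i.e. for
  every step k of the inductive limit and every norm m of s there is a bound.
  Only the values on s' are relevant.\<close>
definition SS :: "(cseq \<Rightarrow> cseq) set" where
  "SS = {x. (\<forall>\<xi>\<in>sd_space. x \<xi> \<in> s_space)
          \<and> (\<forall>\<xi>\<in>sd_space. \<forall>\<eta>\<in>sd_space. \<forall>a b.
                x (\<lambda>k. a * \<xi> k + b * \<eta> k) = (\<lambda>k. a * x \<xi> k + b * x \<eta> k))
          \<and> (\<forall>k m. \<exists>C. \<forall>\<xi>. sd_fin k \<xi> \<longrightarrow> s_norm m (x \<xi>) \<le> C * sd_norm k \<xi>)}"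

definition is_adjoint :: "(cseq \<Rightarrow> cseq) \<Rightarrow> (cseq \<Rightarrow> cseq) \<Rightarrow> bool" where
  "is_adjoint y x \<longleftrightarrow> y \<in> SS \<and>
     (\<forall>\<xi>\<in>sd_space. \<forall>\<eta>\<in>sd_space. pair (y \<xi>) \<eta> = pair \<xi> (x \<eta>))"

definition self_adjoint :: "(cseq \<Rightarrow> cseq) \<Rightarrow> bool" where
  "self_adjoint x \<longleftrightarrow> x \<in> SS \<and> is_adjoint x x"

text \<open>Product xy = x o iota o y (as maps on s').\<close>
definition smult :: "(cseq \<Rightarrow> cseq) \<Rightarrow> (cseq \<Rightarrow> cseq) \<Rightarrow> (cseq \<Rightarrow> cseq)" where
  "smult x y = (\<lambda>\<xi>. x (y \<xi>))"

definition positive :: "(cseq \<Rightarrow> cseq) \<Rightarrow> bool" where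
  "positive x \<longleftrightarrow> x \<in> SS \<and>
     (\<exists>y\<in>SS. \<exists>z. is_adjoint z y \<and> (\<forall>\<xi>\<in>sd_space. x \<xi> = smult z y \<xi>))"

definition op_norm :: "nat \<Rightarrow> (cseq \<Rightarrow> cseq) \<Rightarrow> real" where
  "op_norm n x = Sup {s_norm n (x \<xi>) | \<xi>. \<xi> \<in> sd_space \<and> sd_fin n \<xi> \<and> sd_norm n \<xi> \<le> 1}"

definition nonzero_op :: "(cseq \<Rightarrow> cseq) \<Rightarrow> bool" where
  "nonzero_op x \<longleftrightarrow> (\<exists>\<xi>\<in>sd_space. x \<xi> \<noteq> (\<lambda>k. 0))"

end

theory Submission
  imports Defs "HOL-Analysis.L2_Norm"
begin

text \<open>With \<open>X = d\<^sub>n x d\<^sub>n\<close> one has \<open>\<parallel>x\<parallel>\<^sub>n = \<parallel>X\<parallel>\<close>, so everything reduces to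
  C*-identities on \<open>\<ell>\<^sub>2\<close>.

  (i) If \<open>x = y\<^sup>* y\<close>, then \<open>\<langle>x \<xi>, \<xi>\<rangle> = |y \<xi>|\<^sub>0\<^sup>2\<close> and \<open>\<parallel>x\<parallel>\<^sub>n\<close> is the square of the norm of
  \<open>y\<close> from \<open>(s', |\<cdot>|'\<^sub>n)\<close> to \<open>\<ell>\<^sub>2\<close>.

  (iii) For \<open>y = x\<^sup>*\<close> put \<open>S = d\<^sub>2\<^sub>n y d\<^sub>2\<^sub>n x\<close>. Then \<open>|x \<xi>|\<^sub>n\<^sup>2 = \<langle>S \<xi>, \<xi>\<rangle>'\<^sub>n\<close> and \<open>S\<close> is
  symmetric for \<open>\<langle>_, _\<rangle>'\<^sub>n\<close>, so \<open>A\<^sub>k = |S\<^sup>k \<xi>|'\<^sub>n\<close> is log-convex and \<open>A\<^sub>1 / A\<^sub>0\<close> is bounded by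
  the exponential growth rate of \<open>A\<^sub>k\<close>. Writing \<open>S\<^sup>k\<^sup>+\<^sup>1 = d\<^sub>2\<^sub>n y (d\<^sub>2\<^sub>n x d\<^sub>2\<^sub>n y)\<^sup>k d\<^sub>2\<^sub>n x\<close>
  bounds that rate by \<open>\<parallel>d\<^sub>2\<^sub>n y\<parallel> \<parallel>d\<^sub>2\<^sub>n x\<parallel>\<close> on \<open>\<ell>\<^sub>2\<close>, and
  \<open>\<parallel>d\<^sub>2\<^sub>n y\<parallel>\<^sup>2 = \<parallel>d\<^sub>2\<^sub>n y x d\<^sub>2\<^sub>n\<parallel> = \<parallel>y x\<parallel>\<^sub>2\<^sub>n\<close>. (ii) is the case \<open>y = x\<close>.

  The projection onto the first coordinate has all the norms involved equal to \<open>1\<close>, so both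
  inequalities are attained.\<close>

declare of_nat_Suc [simp del]

lemma series_Cauchy_Schwarz:
  fixes f :: "nat \<Rightarrow> 'a::banach" and a b :: "nat \<Rightarrow> real"
  assumes le: "\<And>k. norm (f k) \<le> a k * b k"
    and a: "summable (\<lambda>k. (a k)\<^sup>2)" and b: "summable (\<lambda>k. (b k)\<^sup>2)"
  shows "summable f" and "norm (suminf f) \<le> sqrt (\<Sum>k. (a k)\<^sup>2) * sqrt (\<Sum>k. (b k)\<^sup>2)"
proof -
  let ?B = "sqrt (\<Sum>k. (a k)\<^sup>2) * sqrt (\<Sum>k. (b k)\<^sup>2)"
  have partial: "(\<Sum>k<m. \<bar>a k\<bar> * \<bar>b k\<bar>) \<le> ?B" for m
  proof -
    have "(\<Sum>k<m. \<bar>a k\<bar> * \<bar>b k\<bar>) \<le> L2_set a {..<m} * L2_set b {..<m}"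
      by (rule L2_set_mult_ineq)
    also have "\<dots> \<le> ?B"
      unfolding L2_set_def using a b
      by (intro mult_mono real_sqrt_le_mono sum_le_suminf) (auto intro: suminf_nonneg sum_nonneg)
    finally show ?thesis .
  qed
  have ab: "summable (\<lambda>k. \<bar>a k\<bar> * \<bar>b k\<bar>)"
    by (rule summableI_nonneg_bounded[OF _ partial]) simp
  have le': "norm (f k) \<le> \<bar>a k\<bar> * \<bar>b k\<bar>" for k
    using le[of k] by (simp add: abs_mult[symmetric])
  have nf: "summable (\<lambda>k. norm (f k))"
    by (rule summable_comparison_test'[OF ab, of 0]) (use le' in simp)
  then show "summable f" by (rule summable_norm_cancel)
  have "norm (suminf f) \<le> (\<Sum>k. norm (f k))" by (rule summable_norm[OF nf])
  also have "\<dots> \<le> (\<Sum>k. \<bar>a k\<bar> * \<bar>b k\<bar>)" by (rule suminf_le[OF le' nf ab])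
  also have "\<dots> \<le> ?B" by (rule suminf_le_const[OF ab partial])
  finally show "norm (suminf f) \<le> ?B" .
qed

lemma suminf_cnj: "summable f \<Longrightarrow> (\<Sum>k. cnj (f k)) = cnj (suminf f)"
  by (metis sums_cnj sums_unique summable_sums)

section \<open>The weighted sequence spaces\<close>

lemma s_fin_mono: "s_fin m \<xi> \<Longrightarrow> m' \<le> m \<Longrightarrow> s_fin m' \<xi>"
  unfolding s_fin_def
  by (erule summable_comparison_test'[where N=0])
     (auto intro!: mult_left_mono power_increasing)

lemma sd_fin_mono: "sd_fin m \<xi> \<Longrightarrow> m \<le> m' \<Longrightarrow> sd_fin m' \<xi>"
  unfolding sd_fin_def
  by (erule summable_comparison_test'[where N=0])
     (auto intro!: divide_left_mono power_increasing mult_pos_pos)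

lemma sd_fin_0_iff: "sd_fin 0 \<xi> \<longleftrightarrow> s_fin 0 \<xi>"
  by (simp add: sd_fin_def s_fin_def)

lemma sd_norm_0_eq: "sd_norm 0 \<xi> = s_norm 0 \<xi>"
  by (simp add: sd_norm_def s_norm_def)

lemma s_fin_imp_sd_fin: "s_fin m \<xi> \<Longrightarrow> sd_fin m' \<xi>"
  using s_fin_mono[of m \<xi> 0] sd_fin_mono[of 0 \<xi> m'] by (simp add: sd_fin_0_iff)

lemma s_space_imp_s_fin: "\<xi> \<in> s_space \<Longrightarrow> s_fin m \<xi>"
  unfolding s_space_def by (cases "m = 0") (auto intro: s_fin_mono[of 1])

lemma sd_fin_imp_sd_space: "sd_fin m \<xi> \<Longrightarrow> \<xi> \<in> sd_space"
  unfolding sd_space_def by (cases "m = 0") (auto intro: sd_fin_mono simp: Suc_le_eq)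

lemma s_fin_imp_sd_space: "s_fin m \<xi> \<Longrightarrow> \<xi> \<in> sd_space"
  by (rule sd_fin_imp_sd_space[OF s_fin_imp_sd_fin])

lemma s_space_imp_sd_fin: "\<xi> \<in> s_space \<Longrightarrow> sd_fin m \<xi>"
  by (rule s_fin_imp_sd_fin[OF s_space_imp_s_fin])

lemma s_space_imp_sd_space: "\<xi> \<in> s_space \<Longrightarrow> \<xi> \<in> sd_space"
  by (rule sd_fin_imp_sd_space[OF s_space_imp_sd_fin])

lemma sd_spaceE: "\<xi> \<in> sd_space \<Longrightarrow> (\<And>p. sd_fin p \<xi> \<Longrightarrow> thesis) \<Longrightarrow> thesis"
  unfolding sd_space_def by auto

lemma s_norm_nonneg: "s_fin m \<xi> \<Longrightarrow> 0 \<le> s_norm m \<xi>"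
  unfolding s_norm_def s_fin_def by (intro real_sqrt_ge_zero suminf_nonneg) auto

lemma sd_norm_nonneg: "sd_fin m \<xi> \<Longrightarrow> 0 \<le> sd_norm m \<xi>"
  unfolding sd_norm_def sd_fin_def by (intro real_sqrt_ge_zero suminf_nonneg) auto

lemma s_norm_power2: "s_fin m \<xi> \<Longrightarrow> (s_norm m \<xi>)\<^sup>2 = (\<Sum>k. (cmod (\<xi> k))\<^sup>2 * real (Suc k) ^ (2 * m))"
  unfolding s_norm_def s_fin_def by (intro real_sqrt_pow2 suminf_nonneg) auto

lemma sd_norm_power2: "sd_fin m \<xi> \<Longrightarrow> (sd_norm m \<xi>)\<^sup>2 = (\<Sum>k. (cmod (\<xi> k))\<^sup>2 / real (Suc k) ^ (2 * m))"
  unfolding sd_norm_def sd_fin_def by (intro real_sqrt_pow2 suminf_nonneg) auto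

lemma s_norm_mono:
  assumes "s_fin m \<xi>" "m' \<le> m"
  shows "s_norm m' \<xi> \<le> s_norm m \<xi>"
  using s_fin_mono[OF assms] assms unfolding s_norm_def s_fin_def
  by (intro real_sqrt_le_mono suminf_le) (auto intro!: mult_left_mono power_increasing)

lemma sd_norm_eq_0_iff: "sd_fin m \<xi> \<Longrightarrow> sd_norm m \<xi> = 0 \<longleftrightarrow> \<xi> = (\<lambda>k. 0)"
  unfolding sd_norm_def sd_fin_def by (auto simp: suminf_eq_zero_iff fun_eq_iff)

lemma zero_seq [simp]:
  "s_fin m (\<lambda>k. 0)" "sd_fin m (\<lambda>k. 0)" "(\<lambda>k. 0) \<in> sd_space"
  "s_norm m (\<lambda>k. 0) = 0" "sd_norm m (\<lambda>k. 0) = 0"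
  by (auto simp: s_fin_def sd_fin_def s_norm_def sd_norm_def sd_space_def)

lemma
  assumes "sd_fin m \<xi>"
  shows sd_fin_scale: "sd_fin m (\<lambda>k. c * \<xi> k)"
    and sd_norm_scale: "sd_norm m (\<lambda>k. c * \<xi> k) = cmod c * sd_norm m \<xi>"
proof -
  have e: "(\<lambda>k. (cmod (c * \<xi> k))\<^sup>2 / real (Suc k) ^ (2 * m))
      = (\<lambda>k. (cmod c)\<^sup>2 * ((cmod (\<xi> k))\<^sup>2 / real (Suc k) ^ (2 * m)))"
    by (simp add: norm_mult power_mult_distrib)
  show "sd_fin m (\<lambda>k. c * \<xi> k)"
    using assms unfolding sd_fin_def e by (rule summable_mult)
  show "sd_norm m (\<lambda>k. c * \<xi> k) = cmod c * sd_norm m \<xi>"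
    using assms unfolding sd_norm_def sd_fin_def e
    by (subst suminf_mult) (auto simp: real_sqrt_mult simp del: power_mult_distrib)
qed

lemma s_norm_scale:
  assumes "s_fin m \<xi>"
  shows "s_norm m (\<lambda>k. c * \<xi> k) = cmod c * s_norm m \<xi>"
proof -
  have e: "(\<lambda>k. (cmod (c * \<xi> k))\<^sup>2 * real (Suc k) ^ (2 * m))
      = (\<lambda>k. (cmod c)\<^sup>2 * ((cmod (\<xi> k))\<^sup>2 * real (Suc k) ^ (2 * m)))"
    by (simp add: norm_mult power_mult_distrib mult.assoc)
  show ?thesis
    using assms unfolding s_norm_def s_fin_def e
    by (subst suminf_mult) (auto simp: real_sqrt_mult simp del: power_mult_distrib)
qed

definition dmult :: "nat \<Rightarrow> cseq \<Rightarrow> cseq" where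
  "dmult p \<xi> = (\<lambda>k. complex_of_real (real (Suc k) ^ p) * \<xi> k)"

lemma norm_dmult: "cmod (dmult p \<xi> k) = real (Suc k) ^ p * cmod (\<xi> k)"
  by (simp add: dmult_def norm_mult norm_power)

lemma dmult_0 [simp]: "dmult 0 \<xi> = \<xi>"
  by (simp add: dmult_def)

lemma dmult_dmult: "dmult p (dmult q \<xi>) = dmult (p + q) \<xi>"
  by (simp add: dmult_def power_add mult_ac)

lemma
  shows s_fin_dmult: "s_fin m (dmult p \<xi>) = s_fin (m + p) \<xi>"
    and s_norm_dmult: "s_norm m (dmult p \<xi>) = s_norm (m + p) \<xi>"
proof -
  have "(\<lambda>k. (cmod (dmult p \<xi> k))\<^sup>2 * real (Suc k) ^ (2 * m))
      = (\<lambda>k. (cmod (\<xi> k))\<^sup>2 * real (Suc k) ^ (2 * (m + p)))"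
    by (simp add: norm_dmult power_mult_distrib power_add power_mult[symmetric] algebra_simps)
  then show "s_fin m (dmult p \<xi>) = s_fin (m + p) \<xi>" "s_norm m (dmult p \<xi>) = s_norm (m + p) \<xi>"
    by (simp_all add: s_fin_def s_norm_def)
qed

lemma
  assumes "m \<le> p"
  shows sd_fin_dmult: "sd_fin m (dmult p \<xi>) = s_fin (p - m) \<xi>"
    and sd_norm_dmult: "sd_norm m (dmult p \<xi>) = s_norm (p - m) \<xi>"
proof -
  have "(\<lambda>k. (cmod (dmult p \<xi> k))\<^sup>2 / real (Suc k) ^ (2 * m))
      = (\<lambda>k. (cmod (\<xi> k))\<^sup>2 * real (Suc k) ^ (2 * (p - m)))"
  proof
    fix k
    have "2 * p = 2 * m + 2 * (p - m)" using assms by simp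
    then have "real (Suc k) ^ (2 * p) = real (Suc k) ^ (2 * m) * real (Suc k) ^ (2 * (p - m))"
      by (metis power_add)
    then show "(cmod (dmult p \<xi> k))\<^sup>2 / real (Suc k) ^ (2 * m)
        = (cmod (\<xi> k))\<^sup>2 * real (Suc k) ^ (2 * (p - m))"
      by (simp add: norm_dmult power_mult_distrib power_mult[symmetric] mult.commute)
  qed
  then show "sd_fin m (dmult p \<xi>) = s_fin (p - m) \<xi>" "sd_norm m (dmult p \<xi>) = s_norm (p - m) \<xi>"
    by (simp_all add: sd_fin_def s_fin_def sd_norm_def s_norm_def)
qed

lemma dmult_s_space: "\<xi> \<in> s_space \<Longrightarrow> dmult p \<xi> \<in> s_space"
  by (auto simp: s_space_def s_fin_dmult intro: s_space_imp_s_fin)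

lemma power2_weight: "(r * real (Suc k) ^ p)\<^sup>2 = r\<^sup>2 * real (Suc k) ^ (2 * p)"
  by (simp add: power_mult_distrib power_even_eq)

lemma power2_weight_divide: "(r / real (Suc k) ^ p)\<^sup>2 = r\<^sup>2 / real (Suc k) ^ (2 * p)"
  by (simp add: power_divide power_even_eq)

lemma
  assumes u: "s_fin p u" and v: "sd_fin p v"
  shows pair_summable: "summable (\<lambda>k. u k * cnj (v k))"
    and norm_pair_le: "cmod (pair u v) \<le> s_norm p u * sd_norm p v"
proof -
  let ?a = "\<lambda>k. cmod (u k) * real (Suc k) ^ p" and ?b = "\<lambda>k. cmod (v k) / real (Suc k) ^ p"
  have le: "cmod (u k * cnj (v k)) \<le> ?a k * ?b k" for k
    by (simp add: norm_mult)
  have "summable (\<lambda>k. (?a k)\<^sup>2)" "summable (\<lambda>k. (?b k)\<^sup>2)"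
    using u v unfolding s_fin_def sd_fin_def power2_weight power2_weight_divide .
  from series_Cauchy_Schwarz[OF le this]
  show "summable (\<lambda>k. u k * cnj (v k))" "cmod (pair u v) \<le> s_norm p u * sd_norm p v"
    unfolding pair_def s_norm_def sd_norm_def power2_weight power2_weight_divide .
qed

lemma pair_summable_s_space:
  assumes "u \<in> s_space" "v \<in> sd_space"
  shows "summable (\<lambda>k. u k * cnj (v k))"
  using assms by (auto elim!: sd_spaceE intro: pair_summable s_space_imp_s_fin)

lemma pair_commute: "summable (\<lambda>k. u k * cnj (v k)) \<Longrightarrow> pair v u = cnj (pair u v)"
  unfolding pair_def by (simp flip: suminf_cnj add: mult.commute)

lemma pair_dmult_commute: "pair (dmult p u) v = pair u (dmult p v)"
  by (simp add: pair_def dmult_def mult_ac)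

lemma pair_dmult_self:
  assumes "s_fin q u"
  shows "pair u (dmult (2 * q) u) = complex_of_real ((s_norm q u)\<^sup>2)"
proof -
  have "u k * cnj (dmult (2 * q) u k)
      = complex_of_real ((cmod (u k))\<^sup>2 * real (Suc k) ^ (2 * q))" for k
    by (simp add: dmult_def mult_ac flip: complex_norm_square)
  then show ?thesis
    using assms unfolding pair_def s_norm_power2[OF assms] s_fin_def by (simp add: suminf_of_real)
qed

definition dual_inner :: "nat \<Rightarrow> cseq \<Rightarrow> cseq \<Rightarrow> complex" where
  "dual_inner n a b = (\<Sum>k. a k * cnj (b k) / complex_of_real (real (Suc k) ^ (2 * n)))"

lemma
  assumes a: "sd_fin n a" and b: "sd_fin n b"
  shows dual_inner_summable:
      "summable (\<lambda>k. a k * cnj (b k) / complex_of_real (real (Suc k) ^ (2 * n)))"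
    and norm_dual_inner_le: "cmod (dual_inner n a b) \<le> sd_norm n a * sd_norm n b"
proof -
  let ?a = "\<lambda>k. cmod (a k) / real (Suc k) ^ n" and ?b = "\<lambda>k. cmod (b k) / real (Suc k) ^ n"
  have le: "cmod (a k * cnj (b k) / complex_of_real (real (Suc k) ^ (2 * n))) \<le> ?a k * ?b k" for k
    by (simp add: norm_mult norm_divide norm_power power_even_eq power2_eq_square)
  have "summable (\<lambda>k. (?a k)\<^sup>2)" "summable (\<lambda>k. (?b k)\<^sup>2)"
    using a b unfolding sd_fin_def power2_weight_divide .
  from series_Cauchy_Schwarz[OF le this]
  show "summable (\<lambda>k. a k * cnj (b k) / complex_of_real (real (Suc k) ^ (2 * n)))"
    "cmod (dual_inner n a b) \<le> sd_norm n a * sd_norm n b"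
    unfolding dual_inner_def sd_norm_def power2_weight_divide .
qed

lemma dual_inner_commute:
  assumes "sd_fin n a" "sd_fin n b"
  shows "dual_inner n b a = cnj (dual_inner n a b)"
  unfolding dual_inner_def suminf_cnj[OF dual_inner_summable[OF assms], symmetric]
  by (simp add: mult.commute)

lemma dual_inner_self: "sd_fin n a \<Longrightarrow> dual_inner n a a = complex_of_real ((sd_norm n a)\<^sup>2)"
  unfolding dual_inner_def sd_norm_power2
  by (simp add: sd_fin_def suminf_of_real flip: complex_norm_square)

lemma dual_inner_dmult: "dual_inner n (dmult (2 * n) a) b = pair a b"
  by (simp add: dual_inner_def pair_def dmult_def)

section \<open>Operators and their norms\<close>

lemma SS_s_space: "x \<in> SS \<Longrightarrow> \<xi> \<in> sd_space \<Longrightarrow> x \<xi> \<in> s_space"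
  unfolding SS_def by blast

lemma SS_scale:
  assumes "x \<in> SS" "\<xi> \<in> sd_space"
  shows "x (\<lambda>k. c * \<xi> k) = (\<lambda>k. c * x \<xi> k)"
proof -
  have "x (\<lambda>k. c * \<xi> k + 0 * \<xi> k) = (\<lambda>k. c * x \<xi> k + 0 * x \<xi> k)"
    using assms unfolding SS_def by blast
  then show ?thesis by simp
qed

lemma SS_bounded: "x \<in> SS \<Longrightarrow> \<exists>C. \<forall>\<xi>. sd_fin k \<xi> \<longrightarrow> s_norm m (x \<xi>) \<le> C * sd_norm k \<xi>"
  unfolding SS_def by blast

lemma s_norm_SS_scale:
  "x \<in> SS \<Longrightarrow> sd_fin n \<xi> \<Longrightarrow> s_norm m (x (\<lambda>k. c * \<xi> k)) = cmod c * s_norm m (x \<xi>)"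
  by (simp add: SS_scale sd_fin_imp_sd_space s_norm_scale s_space_imp_s_fin SS_s_space)

lemma SS_zero: "x \<in> SS \<Longrightarrow> x (\<lambda>k. 0) = (\<lambda>k. 0)"
  using SS_scale[of x "\<lambda>k. 0" 0] by simp

lemma smult_SS:
  assumes x: "x \<in> SS" and y: "y \<in> SS"
  shows "smult y x \<in> SS"
proof -
  have lin: "y (x (\<lambda>k. a * \<xi> k + b * \<eta> k)) = (\<lambda>k. a * y (x \<xi>) k + b * y (x \<eta>) k)"
    if "\<xi> \<in> sd_space" "\<eta> \<in> sd_space" for \<xi> \<eta> a b
    using that x y SS_s_space[OF x] s_space_imp_sd_space unfolding SS_def by auto
  have bound: "\<exists>C. \<forall>\<xi>. sd_fin k \<xi> \<longrightarrow> s_norm m (y (x \<xi>)) \<le> C * sd_norm k \<xi>" for k m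
  proof -
    obtain C1 where C1: "\<And>\<eta>. sd_fin 0 \<eta> \<Longrightarrow> s_norm m (y \<eta>) \<le> C1 * sd_norm 0 \<eta>"
      using SS_bounded[OF y] by blast
    obtain C2 where C2: "\<And>\<xi>. sd_fin k \<xi> \<Longrightarrow> s_norm 0 (x \<xi>) \<le> C2 * sd_norm k \<xi>"
      using SS_bounded[OF x] by blast
    have "s_norm m (y (x \<xi>)) \<le> (\<bar>C1\<bar> * C2) * sd_norm k \<xi>" if \<xi>: "sd_fin k \<xi>" for \<xi>
    proof -
      have x\<xi>: "s_fin 0 (x \<xi>)"
        by (rule s_space_imp_s_fin[OF SS_s_space[OF x sd_fin_imp_sd_space[OF \<xi>]]])
      have "s_norm m (y (x \<xi>)) \<le> C1 * s_norm 0 (x \<xi>)"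
        using C1[of "x \<xi>"] x\<xi> by (simp add: sd_fin_0_iff sd_norm_0_eq)
      also have "\<dots> \<le> \<bar>C1\<bar> * s_norm 0 (x \<xi>)"
        using s_norm_nonneg[OF x\<xi>] by (intro mult_right_mono) auto
      also have "\<dots> \<le> \<bar>C1\<bar> * (C2 * sd_norm k \<xi>)"
        using C2[OF \<xi>] by (intro mult_left_mono) auto
      finally show ?thesis by simp
    qed
    then show ?thesis by blast
  qed
  show ?thesis
    using lin bound SS_s_space[OF y] SS_s_space[OF x] s_space_imp_sd_space
    unfolding SS_def smult_def by (auto simp del: of_nat_Suc)
qed

lemma is_adjoint_sym:
  assumes x: "x \<in> SS" and a: "is_adjoint y x"
  shows "is_adjoint x y"
  unfolding is_adjoint_def
proof (intro conjI x ballI)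
  fix \<xi> \<eta> assume \<xi>: "\<xi> \<in> sd_space" and \<eta>: "\<eta> \<in> sd_space"
  have y: "y \<in> SS" using a by (simp add: is_adjoint_def)
  have "pair (x \<xi>) \<eta> = cnj (pair \<eta> (x \<xi>))"
    by (simp add: pair_commute[OF pair_summable_s_space[OF SS_s_space[OF x \<xi>] \<eta>]])
  also have "pair \<eta> (x \<xi>) = pair (y \<eta>) \<xi>"
    using a \<xi> \<eta> by (simp add: is_adjoint_def)
  also have "cnj (pair (y \<eta>) \<xi>) = pair \<xi> (y \<eta>)"
    by (simp add: pair_commute[OF pair_summable_s_space[OF SS_s_space[OF y \<eta>] \<xi>]])
  finally show "pair (x \<xi>) \<eta> = pair \<xi> (y \<eta>)" .
qed

definition dual_ball :: "nat \<Rightarrow> cseq set" where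
  "dual_ball n = {\<xi>. \<xi> \<in> sd_space \<and> sd_fin n \<xi> \<and> sd_norm n \<xi> \<le> 1}"

lemma zero_in_dual_ball [simp]: "(\<lambda>k. 0) \<in> dual_ball n"
  by (simp add: dual_ball_def)

lemma op_norm_dual_ball: "op_norm n x = Sup ((\<lambda>\<xi>. s_norm n (x \<xi>)) ` dual_ball n)"
  by (simp add: op_norm_def dual_ball_def setcompr_eq_image)

lemma op_norm_cong: "(\<And>\<xi>. \<xi> \<in> sd_space \<Longrightarrow> x \<xi> = x' \<xi>) \<Longrightarrow> op_norm n x = op_norm n x'"
  unfolding op_norm_dual_ball dual_ball_def by (auto intro!: arg_cong[where f=Sup])

lemma le_sd_norm_if_le_on_dual_ball:
  fixes g :: "cseq \<Rightarrow> real"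
  assumes hom: "\<And>\<xi> c. sd_fin n \<xi> \<Longrightarrow> g (\<lambda>k. c * \<xi> k) = cmod c * g \<xi>"
    and bound: "\<And>\<xi>. \<xi> \<in> dual_ball n \<Longrightarrow> g \<xi> \<le> C"
    and \<eta>: "sd_fin n \<eta>"
  shows "g \<eta> \<le> C * sd_norm n \<eta>"
proof (cases "sd_norm n \<eta> = 0")
  case True
  then have "\<eta> = (\<lambda>k. 0)" using sd_norm_eq_0_iff[OF \<eta>] by simp
  then show ?thesis using hom[OF \<eta>, of 0] by simp
next
  case False
  define d where "d = sd_norm n \<eta>"
  have d: "d > 0" using False sd_norm_nonneg[OF \<eta>] by (simp add: d_def)
  let ?\<eta>' = "\<lambda>k. complex_of_real (1 / d) * \<eta> k"
  have fin: "sd_fin n ?\<eta>'" by (rule sd_fin_scale[OF \<eta>])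
  have "sd_norm n ?\<eta>' = 1"
    unfolding sd_norm_scale[OF \<eta>] using d by (simp add: norm_divide d_def)
  then have "?\<eta>' \<in> dual_ball n"
    unfolding dual_ball_def using fin sd_fin_imp_sd_space[OF fin] by simp
  then have "g ?\<eta>' \<le> C" by (rule bound)
  also have "g ?\<eta>' = g \<eta> / d"
    unfolding hom[OF \<eta>] using d by (simp add: norm_divide)
  finally show ?thesis using d by (simp add: d_def pos_divide_le_eq)
qed

lemma s_norm_le_op_norm:
  assumes x: "x \<in> SS" and \<xi>: "\<xi> \<in> dual_ball n"
  shows "s_norm n (x \<xi>) \<le> op_norm n x"
proof -
  obtain C where C: "\<And>\<xi>. sd_fin n \<xi> \<Longrightarrow> s_norm n (x \<xi>) \<le> C * sd_norm n \<xi>"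
    using SS_bounded[OF x] by blast
  have "s_norm n (x \<zeta>) \<le> \<bar>C\<bar>" if "\<zeta> \<in> dual_ball n" for \<zeta>
  proof -
    have \<zeta>: "sd_fin n \<zeta>" "sd_norm n \<zeta> \<le> 1" using that by (simp_all add: dual_ball_def)
    have "C * sd_norm n \<zeta> \<le> \<bar>C\<bar> * 1"
      using \<zeta> sd_norm_nonneg[OF \<zeta>(1)] by (intro mult_mono) auto
    then show ?thesis using C[OF \<zeta>(1)] by simp
  qed
  then show ?thesis
    unfolding op_norm_dual_ball by (intro cSup_upper imageI \<xi> bdd_aboveI2)
qed

lemma op_norm_nonneg: "x \<in> SS \<Longrightarrow> 0 \<le> op_norm n x"
  using s_norm_le_op_norm[OF _ zero_in_dual_ball] by (simp add: SS_zero)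

lemma op_norm_least: "(\<And>\<xi>. \<xi> \<in> dual_ball n \<Longrightarrow> s_norm n (x \<xi>) \<le> C) \<Longrightarrow> op_norm n x \<le> C"
  unfolding op_norm_dual_ball by (rule cSup_least) (use zero_in_dual_ball in blast, auto)

lemma s_norm_apply_le:
  assumes x: "x \<in> SS" and \<zeta>: "sd_fin n \<zeta>"
  shows "s_norm n (x \<zeta>) \<le> op_norm n x * sd_norm n \<zeta>"
  by (rule le_sd_norm_if_le_on_dual_ball[OF s_norm_SS_scale[OF x] s_norm_le_op_norm[OF x] \<zeta>])

section \<open>Log-convex sequences\<close>

lemma le_if_power_le_geometric:
  fixes a b K :: real
  assumes a: "0 \<le> a" and b: "0 \<le> b" and le: "\<And>j. a ^ Suc j \<le> K * b ^ j"
  shows "a \<le> b"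
proof (rule ccontr)
  assume "\<not> a \<le> b"
  then have ab: "b < a" by simp
  show False
  proof (cases "b = 0")
    case True
    then have "a * a \<le> 0" using le[of 1] by (simp add: power2_eq_square)
    then show False using ab True by (simp add: mult_le_0_iff)
  next
    case False
    then have b: "b > 0" using b by simp
    have r: "a / b > 1" using ab b by simp
    obtain j where j: "K / a < (a / b) ^ j" using real_arch_pow[OF r] by blast
    have "a * (a / b) ^ j * b ^ j \<le> K * b ^ j"
      using le[of j] b by (simp add: power_divide)
    then have "(a / b) ^ j \<le> K / a" using ab b by (simp add: field_simps)
    then show False using j by simp
  qed
qed

lemma log_convex_power_le:
  fixes A :: "nat \<Rightarrow> real"
  assumes nonneg: "\<And>k. 0 \<le> A k" and convex: "\<And>k. (A (Suc k))\<^sup>2 \<le> A k * A (Suc (Suc k))"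
  shows "A 1 ^ Suc k \<le> A (Suc k) * A 0 ^ k"
proof -
  have ratio: "A 1 * A k \<le> A (Suc k) * A 0" for k
  proof (induction k)
    case 0
    then show ?case by (simp add: mult.commute)
  next
    case (Suc k)
    have "A (Suc k) * (A 1 * A (Suc k)) = A 1 * (A (Suc k))\<^sup>2"
      by (simp add: power2_eq_square mult_ac)
    also have "\<dots> \<le> A 1 * (A k * A (Suc (Suc k)))"
      using convex nonneg by (intro mult_left_mono) auto
    also have "\<dots> = (A 1 * A k) * A (Suc (Suc k))" by (simp add: mult_ac)
    also have "\<dots> \<le> (A (Suc k) * A 0) * A (Suc (Suc k))"
      using Suc nonneg by (intro mult_right_mono) auto
    finally have "A (Suc k) * (A 1 * A (Suc k)) \<le> A (Suc k) * (A (Suc (Suc k)) * A 0)"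
      by (simp add: mult_ac)
    then show ?case
      using nonneg[of "Suc k"] nonneg[of "Suc (Suc k)"] nonneg[of 0]
      by (cases "A (Suc k) = 0") auto
  qed
  show "A 1 ^ Suc k \<le> A (Suc k) * A 0 ^ k"
  proof (induction k)
    case 0
    then show ?case by simp
  next
    case (Suc k)
    have "A 1 ^ Suc (Suc k) = A 1 * A 1 ^ Suc k" by simp
    also have "\<dots> \<le> A 1 * (A (Suc k) * A 0 ^ k)"
      using Suc nonneg by (intro mult_left_mono) auto
    also have "\<dots> \<le> A (Suc (Suc k)) * A 0 * A 0 ^ k"
      using ratio[of "Suc k"] nonneg by (simp add: mult.assoc[symmetric] mult_right_mono)
    finally show ?case by (simp add: mult_ac)
  qed
qed

lemma log_convex_le_geometric:
  fixes A :: "nat \<Rightarrow> real"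
  assumes nonneg: "\<And>k. 0 \<le> A k" and convex: "\<And>k. (A (Suc k))\<^sup>2 \<le> A k * A (Suc (Suc k))"
    and growth: "\<And>j. A (Suc j) \<le> K * L ^ j" and L: "0 \<le> L"
  shows "A 1 \<le> L * A 0"
proof (rule le_if_power_le_geometric)
  fix j
  have "A 1 ^ Suc j \<le> A (Suc j) * A 0 ^ j" using nonneg convex by (rule log_convex_power_le)
  also have "\<dots> \<le> K * L ^ j * A 0 ^ j"
    using growth nonneg by (intro mult_right_mono) auto
  finally show "A 1 ^ Suc j \<le> K * (L * A 0) ^ j" by (simp add: power_mult_distrib mult_ac)
qed (use nonneg L in auto)

section \<open>The spectral radius bound\<close>

lemma s_norm_apply_dmult_le:
  assumes x: "x \<in> SS" and a: "is_adjoint y x" and \<gamma>: "s_fin 0 \<gamma>"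
  shows "(s_norm 0 (x (dmult (2 * n) \<gamma>)))\<^sup>2 \<le> op_norm (2 * n) (smult y x) * (s_norm 0 \<gamma>)\<^sup>2"
proof -
  have y: "y \<in> SS" using a by (simp add: is_adjoint_def)
  define \<zeta> where "\<zeta> = dmult (2 * n) \<gamma>"
  have \<zeta>: "sd_fin (2 * n) \<zeta>" "sd_norm (2 * n) \<zeta> = s_norm 0 \<gamma>"
    using \<gamma> by (simp_all add: \<zeta>_def sd_fin_dmult sd_norm_dmult)
  define u where "u = x \<zeta>"
  have u: "u \<in> s_space" unfolding u_def by (rule SS_s_space[OF x sd_fin_imp_sd_space[OF \<zeta>(1)]])
  have yu: "y u \<in> s_space" by (rule SS_s_space[OF y s_space_imp_sd_space[OF u]])
  have "complex_of_real ((s_norm 0 u)\<^sup>2) = pair u u"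
    using pair_dmult_self[OF s_space_imp_s_fin[OF u], of 0] by simp
  also have "\<dots> = pair (y u) \<zeta>"
    using a s_space_imp_sd_space[OF u] sd_fin_imp_sd_space[OF \<zeta>(1)]
    by (simp add: is_adjoint_def u_def)
  finally have "(s_norm 0 u)\<^sup>2 = cmod (pair (y u) \<zeta>)"
    by (metis abs_power2 norm_of_real)
  also have "\<dots> \<le> s_norm (2 * n) (y u) * s_norm 0 \<gamma>"
    using norm_pair_le[OF s_space_imp_s_fin[OF yu] \<zeta>(1)] by (simp add: \<zeta>(2))
  also have "\<dots> \<le> op_norm (2 * n) (smult y x) * s_norm 0 \<gamma> * s_norm 0 \<gamma>"
    using s_norm_apply_le[OF smult_SS[OF x y] \<zeta>(1)] s_norm_nonneg[OF \<gamma>]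
    by (intro mult_right_mono) (auto simp: smult_def u_def \<zeta>(2))
  finally show ?thesis by (simp add: u_def \<zeta>_def power2_eq_square mult.assoc)
qed

text \<open>On \<open>\<ell>\<^sub>2\<close>, \<open>x d\<^sub>2\<^sub>n\<close> is the adjoint of \<open>d\<^sub>2\<^sub>n y\<close>, so the previous bound on \<open>\<parallel>x d\<^sub>2\<^sub>n\<parallel>\<close>
  transfers to \<open>\<parallel>d\<^sub>2\<^sub>n y\<parallel>\<close> via \<open>\<parallel>T\<^sup>* \<beta>\<parallel>\<^sup>2 = \<langle>\<beta>, T T\<^sup>* \<beta>\<rangle>\<close>.\<close>

lemma s_norm_dmult_adjoint_le:
  assumes x: "x \<in> SS" and a: "is_adjoint y x" and \<beta>: "s_fin 0 \<beta>"
  shows "s_norm 0 (dmult (2 * n) (y \<beta>)) \<le> sqrt (op_norm (2 * n) (smult y x)) * s_norm 0 \<beta>"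
proof -
  let ?P = "op_norm (2 * n) (smult y x)"
  have y: "y \<in> SS" using a by (simp add: is_adjoint_def)
  have \<beta>': "\<beta> \<in> sd_space" by (rule s_fin_imp_sd_space[OF \<beta>])
  define v where "v = y \<beta>"
  have v: "v \<in> s_space" unfolding v_def by (rule SS_s_space[OF y \<beta>'])
  define \<gamma> where "\<gamma> = dmult (2 * n) v"
  have \<gamma>: "\<gamma> \<in> s_space" "dmult (2 * n) \<gamma> \<in> s_space"
    unfolding \<gamma>_def using v by (simp_all add: dmult_s_space)
  define w where "w = x (dmult (2 * n) \<gamma>)"
  have w: "w \<in> s_space" unfolding w_def by (rule SS_s_space[OF x s_space_imp_sd_space[OF \<gamma>(2)]])
  define g where "g = s_norm 0 \<gamma>"
  have g: "g \<ge> 0" unfolding g_def by (rule s_norm_nonneg[OF s_space_imp_s_fin[OF \<gamma>(1)]])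
  have "complex_of_real (g\<^sup>2) = pair v (dmult (2 * n) \<gamma>)"
    using pair_dmult_self[OF s_space_imp_s_fin[OF v], of "2 * n"]
    by (simp add: g_def \<gamma>_def s_norm_dmult dmult_dmult)
  also have "\<dots> = pair \<beta> w"
    using a \<beta>' s_space_imp_sd_space[OF \<gamma>(2)] by (simp add: is_adjoint_def v_def w_def)
  finally have "g\<^sup>2 = cmod (pair \<beta> w)"
    by (metis abs_power2 norm_of_real)
  also have "\<dots> = cmod (pair w \<beta>)"
    by (simp add: pair_commute[OF pair_summable_s_space[OF w \<beta>']])
  also have "\<dots> \<le> s_norm 0 w * s_norm 0 \<beta>"
    using norm_pair_le[OF s_space_imp_s_fin[OF w], where v = \<beta> and p = 0] \<beta>
    by (simp add: sd_fin_0_iff sd_norm_0_eq)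
  also have "\<dots> \<le> sqrt ?P * g * s_norm 0 \<beta>"
  proof (intro mult_right_mono s_norm_nonneg[OF \<beta>])
    have "(s_norm 0 w)\<^sup>2 \<le> ?P * g\<^sup>2"
      unfolding w_def g_def by (rule s_norm_apply_dmult_le[OF x a s_space_imp_s_fin[OF \<gamma>(1)]])
    then show "s_norm 0 w \<le> sqrt ?P * g"
      using g by (metis real_le_rsqrt real_sqrt_mult real_sqrt_abs abs_of_nonneg)
  qed
  finally have "g * g \<le> g * (sqrt ?P * s_norm 0 \<beta>)"
    by (simp add: power2_eq_square mult_ac)
  then have "g \<le> sqrt ?P * s_norm 0 \<beta>"
    using g op_norm_nonneg[OF smult_SS[OF x y]] s_norm_nonneg[OF \<beta>]
    by (cases "g = 0") auto
  then show ?thesis by (simp add: g_def \<gamma>_def v_def)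
qed

lemma sd_fin_iterate:
  assumes "\<And>u. sd_fin n u \<Longrightarrow> S u \<in> s_space" and "sd_fin n \<xi>"
  shows "sd_fin n ((S ^^ k) \<xi>)"
  by (induction k) (use assms s_space_imp_sd_fin in auto)

lemma sd_norm_iterate_log_convex:
  assumes maps: "\<And>u. sd_fin n u \<Longrightarrow> S u \<in> s_space"
    and sym: "\<And>u v. sd_fin n u \<Longrightarrow> sd_fin n v \<Longrightarrow> dual_inner n (S u) v = dual_inner n u (S v)"
    and \<xi>: "sd_fin n \<xi>"
  shows "(sd_norm n ((S ^^ Suc k) \<xi>))\<^sup>2 \<le> sd_norm n ((S ^^ k) \<xi>) * sd_norm n ((S ^^ Suc (Suc k)) \<xi>)"
proof -
  define u where "u = (S ^^ k) \<xi>"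
  have fin: "sd_fin n u" "sd_fin n (S u)" "sd_fin n (S (S u))"
    using sd_fin_iterate[OF maps \<xi>, where k = k] sd_fin_iterate[OF maps \<xi>, where k = "Suc k"]
      sd_fin_iterate[OF maps \<xi>, where k = "Suc (Suc k)"]
    by (simp_all add: u_def)
  have "complex_of_real ((sd_norm n (S u))\<^sup>2) = dual_inner n u (S (S u))"
    using dual_inner_self[OF fin(2)] sym[OF fin(1,2)] by simp
  then have "(sd_norm n (S u))\<^sup>2 = cmod (dual_inner n u (S (S u)))"
    by (metis abs_power2 norm_of_real)
  also have "\<dots> \<le> sd_norm n u * sd_norm n (S (S u))"
    by (rule norm_dual_inner_le[OF fin(1,3)])
  finally show ?thesis by (simp add: u_def)
qed

definition dsquare :: "nat \<Rightarrow> (cseq \<Rightarrow> cseq) \<Rightarrow> (cseq \<Rightarrow> cseq) \<Rightarrow> cseq \<Rightarrow> cseq" where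
  "dsquare n y x \<xi> = dmult (2 * n) (y (dmult (2 * n) (x \<xi>)))"

context
  fixes n :: nat and x y :: "cseq \<Rightarrow> cseq"
  assumes x: "x \<in> SS" and adj: "is_adjoint y x"
begin

private lemma y_SS: "y \<in> SS"
  using adj by (simp add: is_adjoint_def)

private lemma op_norm_products_nonneg:
  "0 \<le> op_norm m (smult y x)" "0 \<le> op_norm m (smult x y)"
  using op_norm_nonneg smult_SS x y_SS by blast+

private lemma dx_s_space: "u \<in> sd_space \<Longrightarrow> dmult (2 * n) (x u) \<in> s_space"
  using SS_s_space[OF x] by (simp add: dmult_s_space)

lemma dsquare_s_space: "u \<in> sd_space \<Longrightarrow> dsquare n y x u \<in> s_space"
  unfolding dsquare_def
  using dx_s_space SS_s_space[OF y_SS] s_space_imp_sd_space by (simp add: dmult_s_space)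

lemma dual_inner_dsquare:
  assumes "u \<in> sd_space" "v \<in> sd_space"
  shows "dual_inner n (dsquare n y x u) v = pair (dmult (2 * n) (x u)) (x v)"
  using adj assms s_space_imp_sd_space[OF dx_s_space[OF assms(1)]]
  by (simp add: dsquare_def dual_inner_dmult is_adjoint_def)

lemma dual_inner_dsquare_commute:
  assumes u: "sd_fin n u" and v: "sd_fin n v"
  shows "dual_inner n (dsquare n y x u) v = dual_inner n u (dsquare n y x v)"
proof -
  have u': "u \<in> sd_space" and v': "v \<in> sd_space"
    using u v by (simp_all add: sd_fin_imp_sd_space)
  have xv: "x v \<in> sd_space" by (rule s_space_imp_sd_space[OF SS_s_space[OF x v']])
  have "dual_inner n u (dsquare n y x v) = cnj (pair (dmult (2 * n) (x v)) (x u))"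
    using dual_inner_commute[OF s_space_imp_sd_fin[OF dsquare_s_space[OF v']] u]
    by (simp add: dual_inner_dsquare[OF v' u'])
  also have "\<dots> = pair (dmult (2 * n) (x u)) (x v)"
    using pair_commute[OF pair_summable_s_space[OF dx_s_space[OF u'] xv]]
    by (simp add: pair_dmult_commute)
  finally show ?thesis by (simp add: dual_inner_dsquare[OF u' v'])
qed

lemma s_norm_apply_power2_eq:
  assumes "\<xi> \<in> sd_space"
  shows "complex_of_real ((s_norm n (x \<xi>))\<^sup>2) = dual_inner n (dsquare n y x \<xi>) \<xi>"
  using pair_dmult_self[OF s_space_imp_s_fin[OF SS_s_space[OF x assms]], of n]
  by (simp add: dual_inner_dsquare[OF assms assms] pair_dmult_commute)

lemma sd_norm_dsquare_le:
  assumes u: "u \<in> sd_space"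
  shows "sd_norm n (dsquare n y x u)
    \<le> sqrt (op_norm (2 * n) (smult y x)) * s_norm 0 (dmult (2 * n) (x u))"
proof -
  let ?\<beta> = "dmult (2 * n) (x u)"
  have \<beta>: "?\<beta> \<in> s_space" by (rule dx_s_space[OF u])
  have y\<beta>: "y ?\<beta> \<in> s_space" by (rule SS_s_space[OF y_SS s_space_imp_sd_space[OF \<beta>]])
  have "sd_norm n (dsquare n y x u) = s_norm n (y ?\<beta>)"
    by (simp add: dsquare_def sd_norm_dmult)
  also have "\<dots> \<le> s_norm (2 * n) (y ?\<beta>)"
    by (rule s_norm_mono[OF s_space_imp_s_fin[OF y\<beta>]]) simp
  also have "\<dots> = s_norm 0 (dmult (2 * n) (y ?\<beta>))"
    by (simp add: s_norm_dmult)
  also have "\<dots> \<le> sqrt (op_norm (2 * n) (smult y x)) * s_norm 0 ?\<beta>"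
    by (rule s_norm_dmult_adjoint_le[OF x adj s_space_imp_s_fin[OF \<beta>]])
  finally show ?thesis .
qed

lemma s_norm_dmult_apply_dsquare_le:
  assumes u: "u \<in> sd_space"
  shows "s_norm 0 (dmult (2 * n) (x (dsquare n y x u)))
    \<le> sqrt (op_norm (2 * n) (smult y x)) * sqrt (op_norm (2 * n) (smult x y))
      * s_norm 0 (dmult (2 * n) (x u))"
proof -
  let ?\<beta> = "dmult (2 * n) (x u)"
  have \<beta>: "?\<beta> \<in> s_space" by (rule dx_s_space[OF u])
  have dy\<beta>: "dmult (2 * n) (y ?\<beta>) \<in> s_space"
    by (rule dmult_s_space[OF SS_s_space[OF y_SS s_space_imp_sd_space[OF \<beta>]]])
  have "s_norm 0 (dmult (2 * n) (x (dsquare n y x u)))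
      \<le> sqrt (op_norm (2 * n) (smult x y)) * s_norm 0 (dmult (2 * n) (y ?\<beta>))"
    unfolding dsquare_def
    by (rule s_norm_dmult_adjoint_le[OF y_SS is_adjoint_sym[OF x adj] s_space_imp_s_fin[OF dy\<beta>]])
  also have "\<dots> \<le> sqrt (op_norm (2 * n) (smult x y))
      * (sqrt (op_norm (2 * n) (smult y x)) * s_norm 0 ?\<beta>)"
    by (intro mult_left_mono s_norm_dmult_adjoint_le[OF x adj s_space_imp_s_fin[OF \<beta>]])
      (simp add: op_norm_products_nonneg)
  finally show ?thesis by (simp add: mult_ac)
qed

lemma sd_norm_dsquare_iterate_le:
  assumes \<xi>: "\<xi> \<in> sd_space"
  shows "sd_norm n ((dsquare n y x ^^ Suc j) \<xi>)
    \<le> sqrt (op_norm (2 * n) (smult y x)) * s_norm 0 (dmult (2 * n) (x \<xi>))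
      * (sqrt (op_norm (2 * n) (smult y x)) * sqrt (op_norm (2 * n) (smult x y))) ^ j"
proof -
  let ?S = "dsquare n y x"
    and ?L = "sqrt (op_norm (2 * n) (smult y x)) * sqrt (op_norm (2 * n) (smult x y))"
  have iter: "(?S ^^ j) \<xi> \<in> sd_space" for j
    by (induction j) (simp_all add: \<xi> dsquare_s_space s_space_imp_sd_space)
  have L: "0 \<le> ?L" by (simp add: op_norm_products_nonneg)
  have geom: "s_norm 0 (dmult (2 * n) (x ((?S ^^ j) \<xi>)))
      \<le> ?L ^ j * s_norm 0 (dmult (2 * n) (x \<xi>))" for j
  proof (induction j)
    case (Suc j)
    have "s_norm 0 (dmult (2 * n) (x ((?S ^^ Suc j) \<xi>)))
        \<le> ?L * s_norm 0 (dmult (2 * n) (x ((?S ^^ j) \<xi>)))"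
      using s_norm_dmult_apply_dsquare_le[OF iter[of j]] by simp
    also have "\<dots> \<le> ?L * (?L ^ j * s_norm 0 (dmult (2 * n) (x \<xi>)))"
      using Suc L by (rule mult_left_mono)
    finally show ?case by (simp add: mult_ac)
  qed simp
  have "sd_norm n ((?S ^^ Suc j) \<xi>)
      \<le> sqrt (op_norm (2 * n) (smult y x)) * s_norm 0 (dmult (2 * n) (x ((?S ^^ j) \<xi>)))"
    using sd_norm_dsquare_le[OF iter[of j]] by simp
  also have "\<dots> \<le> sqrt (op_norm (2 * n) (smult y x)) * (?L ^ j * s_norm 0 (dmult (2 * n) (x \<xi>)))"
    using geom by (intro mult_left_mono) (auto simp: op_norm_products_nonneg)
  finally show ?thesis by (simp add: mult_ac)
qed

lemma s_norm_apply_power2_le: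
  assumes \<xi>: "\<xi> \<in> dual_ball n"
  shows "(s_norm n (x \<xi>))\<^sup>2
    \<le> sqrt (op_norm (2 * n) (smult y x)) * sqrt (op_norm (2 * n) (smult x y))"
proof -
  let ?S = "dsquare n y x"
    and ?L = "sqrt (op_norm (2 * n) (smult y x)) * sqrt (op_norm (2 * n) (smult x y))"
  define A where "A k = sd_norm n ((?S ^^ k) \<xi>)" for k
  have \<xi>': "\<xi> \<in> sd_space" "sd_fin n \<xi>" and A0: "A 0 \<le> 1"
    using \<xi> by (simp_all add: dual_ball_def A_def)
  have maps: "\<And>u. sd_fin n u \<Longrightarrow> ?S u \<in> s_space"
    by (simp add: dsquare_s_space sd_fin_imp_sd_space)
  have nonneg: "0 \<le> A k" for k
    unfolding A_def by (rule sd_norm_nonneg[OF sd_fin_iterate[OF maps \<xi>'(2)]])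
  have "A 1 \<le> ?L * A 0"
  proof (rule log_convex_le_geometric[OF nonneg])
    show "(A (Suc k))\<^sup>2 \<le> A k * A (Suc (Suc k))" for k
      unfolding A_def
      by (rule sd_norm_iterate_log_convex[OF maps dual_inner_dsquare_commute \<xi>'(2)])
    show "A (Suc j) \<le> sqrt (op_norm (2 * n) (smult y x)) * s_norm 0 (dmult (2 * n) (x \<xi>)) * ?L ^ j"
      for j
      unfolding A_def by (rule sd_norm_dsquare_iterate_le[OF \<xi>'(1)])
  qed (simp add: op_norm_products_nonneg)
  have "(s_norm n (x \<xi>))\<^sup>2 = cmod (dual_inner n (?S \<xi>) \<xi>)"
    by (metis s_norm_apply_power2_eq[OF \<xi>'(1)] abs_power2 norm_of_real)
  also have "\<dots> \<le> A 1 * A 0"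
    unfolding A_def
    using norm_dual_inner_le[OF s_space_imp_sd_fin[OF dsquare_s_space[OF \<xi>'(1)]] \<xi>'(2)]
    by simp
  also have "\<dots> \<le> ?L * A 0 * A 0"
    using \<open>A 1 \<le> ?L * A 0\<close> nonneg by (rule mult_right_mono)
  also have "\<dots> \<le> ?L * 1 * 1"
    using A0 nonneg[of 0] by (intro mult_mono) (auto simp: op_norm_products_nonneg)
  finally show ?thesis by simp
qed

lemma op_norm_power2_le:
  "(op_norm n x)\<^sup>2 \<le> sqrt (op_norm (2 * n) (smult y x)) * sqrt (op_norm (2 * n) (smult x y))"
proof -
  let ?L = "sqrt (op_norm (2 * n) (smult y x)) * sqrt (op_norm (2 * n) (smult x y))"
  have "op_norm n x \<le> sqrt ?L"
    by (intro op_norm_least real_le_rsqrt s_norm_apply_power2_le)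
  then show ?thesis
    using power_mono[OF _ op_norm_nonneg[OF x], where b = "sqrt ?L" and n = 2]
    by (simp add: op_norm_products_nonneg)
qed

end

section \<open>Positive operators\<close>

lemma Re_pair_le_op_norm:
  assumes x: "x \<in> SS" and \<xi>: "\<xi> \<in> dual_ball n"
  shows "Re (pair (x \<xi>) \<xi>) \<le> op_norm n x"
proof -
  have \<xi>': "\<xi> \<in> sd_space" "sd_fin n \<xi>" "sd_norm n \<xi> \<le> 1" using \<xi> by (simp_all add: dual_ball_def)
  have "Re (pair (x \<xi>) \<xi>) \<le> cmod (pair (x \<xi>) \<xi>)" by (rule complex_Re_le_cmod)
  also have "\<dots> \<le> s_norm n (x \<xi>) * sd_norm n \<xi>"
    by (rule norm_pair_le[OF s_space_imp_s_fin[OF SS_s_space[OF x \<xi>'(1)]] \<xi>'(2)])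
  also have "\<dots> \<le> op_norm n x * 1"
    using s_norm_le_op_norm[OF x \<xi>] \<xi>'(3) sd_norm_nonneg[OF \<xi>'(2)] op_norm_nonneg[OF x]
    by (intro mult_mono) auto
  finally show ?thesis by simp
qed

lemma pair_adjoint_mult_self:
  assumes y: "y \<in> SS" and adj: "is_adjoint z y" and \<xi>: "\<xi> \<in> sd_space"
  shows "pair (smult z y \<xi>) \<xi> = complex_of_real ((s_norm 0 (y \<xi>))\<^sup>2)"
proof -
  have y\<xi>: "y \<xi> \<in> s_space" by (rule SS_s_space[OF y \<xi>])
  have "pair (smult z y \<xi>) \<xi> = pair (y \<xi>) (y \<xi>)"
    using adj \<xi> s_space_imp_sd_space[OF y\<xi>] by (simp add: is_adjoint_def smult_def)
  also have "\<dots> = complex_of_real ((s_norm 0 (y \<xi>))\<^sup>2)"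
    using pair_dmult_self[OF s_space_imp_s_fin[OF y\<xi>], of 0] by simp
  finally show ?thesis .
qed

lemma s_norm_adjoint_mult_le:
  assumes y: "y \<in> SS" and adj: "is_adjoint z y" and \<xi>: "\<xi> \<in> dual_ball n"
    and c: "0 \<le> c" and bound: "\<And>\<eta>. sd_fin n \<eta> \<Longrightarrow> s_norm 0 (y \<eta>) \<le> c * sd_norm n \<eta>"
  shows "s_norm n (smult z y \<xi>) \<le> c\<^sup>2"
proof -
  have z: "z \<in> SS" using adj by (simp add: is_adjoint_def)
  have \<xi>': "\<xi> \<in> sd_space" "sd_fin n \<xi>" "sd_norm n \<xi> \<le> 1" using \<xi> by (simp_all add: dual_ball_def)
  define v where "v = smult z y \<xi>"
  have v: "v \<in> s_space"
    unfolding v_def smult_def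
    by (rule SS_s_space[OF z s_space_imp_sd_space[OF SS_s_space[OF y \<xi>'(1)]]])
  define \<eta> where "\<eta> = dmult (2 * n) v"
  have \<eta>: "\<eta> \<in> s_space" "sd_norm n \<eta> = s_norm n v"
    using v by (simp_all add: \<eta>_def dmult_s_space sd_norm_dmult)
  have y\<xi>: "y \<xi> \<in> s_space" and y\<eta>: "y \<eta> \<in> s_space"
    using SS_s_space[OF y] \<xi>'(1) s_space_imp_sd_space[OF \<eta>(1)] by auto
  have "complex_of_real ((s_norm n v)\<^sup>2) = pair v \<eta>"
    using pair_dmult_self[OF s_space_imp_s_fin[OF v], of n] by (simp add: \<eta>_def)
  also have "\<dots> = pair (y \<xi>) (y \<eta>)"
    using adj y\<xi> \<eta>(1) by (simp add: v_def smult_def is_adjoint_def s_space_imp_sd_space)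
  finally have "(s_norm n v)\<^sup>2 = cmod (pair (y \<xi>) (y \<eta>))"
    by (metis abs_power2 norm_of_real)
  also have "\<dots> \<le> s_norm 0 (y \<xi>) * s_norm 0 (y \<eta>)"
    using norm_pair_le[OF s_space_imp_s_fin[OF y\<xi>], where p = 0 and v = "y \<eta>"]
      s_space_imp_sd_fin[OF y\<eta>]
    by (simp add: sd_norm_0_eq)
  also have "\<dots> \<le> c * (c * s_norm n v)"
  proof (rule mult_mono)
    show "s_norm 0 (y \<xi>) \<le> c"
      using bound[OF \<xi>'(2)] mult_left_le[OF \<xi>'(3) c] by simp
    show "s_norm 0 (y \<eta>) \<le> c * s_norm n v"
      using bound[OF s_space_imp_sd_fin[OF \<eta>(1)]] \<eta>(2) by simp
  qed (use c s_norm_nonneg[OF s_space_imp_s_fin[OF y\<eta>]] in auto)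
  finally have "s_norm n v * s_norm n v \<le> s_norm n v * c\<^sup>2"
    by (simp add: power2_eq_square mult_ac)
  then show ?thesis
    using s_norm_nonneg[OF s_space_imp_s_fin[OF v], of n] c
    by (cases "s_norm n v = 0") (auto simp: v_def)
qed

lemma op_norm_adjoint_mult:
  assumes y: "y \<in> SS" and adj: "is_adjoint z y"
  shows "op_norm n (smult z y) = Sup ((\<lambda>\<xi>. Re (pair (smult z y \<xi>) \<xi>)) ` dual_ball n)"
proof -
  let ?Q = "\<lambda>\<xi>. Re (pair (smult z y \<xi>) \<xi>)"
  have x: "smult z y \<in> SS" using adj by (simp add: is_adjoint_def smult_SS[OF y])
  have Q: "?Q \<xi> = (s_norm 0 (y \<xi>))\<^sup>2" if "\<xi> \<in> dual_ball n" for \<xi>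
    using pair_adjoint_mult_self[OF y adj] that by (simp add: dual_ball_def)
  define M where "M = Sup (?Q ` dual_ball n)"
  have "M \<le> op_norm n (smult z y)"
    unfolding M_def using Re_pair_le_op_norm[OF x]
    by (intro cSup_least) (use zero_in_dual_ball in blast, auto)
  moreover have "op_norm n (smult z y) \<le> M"
  proof -
    have le_M: "(s_norm 0 (y \<xi>))\<^sup>2 \<le> M" if "\<xi> \<in> dual_ball n" for \<xi>
      unfolding M_def Q[OF that, symmetric] using Re_pair_le_op_norm[OF x] that
      by (intro cSup_upper bdd_aboveI2) auto
    have M: "0 \<le> M" using le_M[OF zero_in_dual_ball] by (simp add: SS_zero[OF y])
    have "s_norm 0 (y \<eta>) \<le> sqrt M * sd_norm n \<eta>" if \<eta>: "sd_fin n \<eta>" for \<eta>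
    proof (rule le_sd_norm_if_le_on_dual_ball[OF s_norm_SS_scale[OF y] _ \<eta>])
      show "s_norm 0 (y \<xi>) \<le> sqrt M" if "\<xi> \<in> dual_ball n" for \<xi>
        by (rule real_le_rsqrt[OF le_M[OF that]])
    qed
    then have "op_norm n (smult z y) \<le> (sqrt M)\<^sup>2"
      by (intro op_norm_least s_norm_adjoint_mult_le[OF y adj]) (use M in auto)
    then show ?thesis using M by simp
  qed
  ultimately show ?thesis unfolding M_def by simp
qed

section \<open>Sharpness\<close>

definition proj0 :: "cseq \<Rightarrow> cseq" where
  "proj0 \<xi> = (\<lambda>k. if k = 0 then \<xi> 0 else 0)"

definition unit0 :: cseq where
  "unit0 = (\<lambda>k. if k = 0 then 1 else 0)"

lemma
  shows s_fin_proj0: "s_fin m (proj0 \<xi>)"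
    and s_norm_proj0: "s_norm m (proj0 \<xi>) = cmod (\<xi> 0)"
proof -
  have z: "k \<notin> {0} \<Longrightarrow> (cmod (proj0 \<xi> k))\<^sup>2 * real (Suc k) ^ (2 * m) = 0" for k
    by (simp add: proj0_def)
  show "s_fin m (proj0 \<xi>)"
    unfolding s_fin_def by (rule summable_finite[of "{0}"]) (use z in auto)
  show "s_norm m (proj0 \<xi>) = cmod (\<xi> 0)"
    unfolding s_norm_def
    by (subst suminf_finite[of "{0}"]) (use z in \<open>auto simp: proj0_def of_nat_Suc\<close>)
qed

lemma
  shows sd_fin_unit0: "sd_fin m unit0"
    and sd_norm_unit0: "sd_norm m unit0 = 1"
proof -
  have z: "k \<notin> {0} \<Longrightarrow> (cmod (unit0 k))\<^sup>2 / real (Suc k) ^ (2 * m) = 0" for k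
    by (simp add: unit0_def)
  show "sd_fin m unit0"
    unfolding sd_fin_def by (rule summable_finite[of "{0}"]) (use z in auto)
  show "sd_norm m unit0 = 1"
    unfolding sd_norm_def
    by (subst suminf_finite[of "{0}"]) (use z in \<open>auto simp: unit0_def of_nat_Suc\<close>)
qed

lemma norm_first_le_sd_norm: "sd_fin m \<xi> \<Longrightarrow> cmod (\<xi> 0) \<le> sd_norm m \<xi>"
  unfolding sd_norm_def sd_fin_def
  by (rule real_le_rsqrt, drule sum_le_suminf[where I = "{0}"]) (auto simp: of_nat_Suc)

lemma proj0_SS: "proj0 \<in> SS"
  unfolding SS_def
proof (intro CollectI conjI ballI allI)
  show "proj0 \<xi> \<in> s_space" for \<xi>
    by (simp add: s_space_def s_fin_proj0)
  show "proj0 (\<lambda>k. a * \<xi> k + b * \<eta> k) = (\<lambda>k. a * proj0 \<xi> k + b * proj0 \<eta> k)" for \<xi> \<eta> a b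
    by (simp add: proj0_def fun_eq_iff)
  show "\<exists>C. \<forall>\<xi>. sd_fin k \<xi> \<longrightarrow> s_norm m (proj0 \<xi>) \<le> C * sd_norm k \<xi>" for k m
    by (rule exI[of _ 1]) (simp add: s_norm_proj0 norm_first_le_sd_norm)
qed

lemma self_adjoint_proj0: "self_adjoint proj0"
proof -
  have "pair (proj0 \<xi>) \<eta> = pair \<xi> (proj0 \<eta>)" for \<xi> \<eta>
    unfolding pair_def
    by (subst (1 2) suminf_finite[of "{0}"]) (auto simp: proj0_def)
  then show ?thesis by (simp add: self_adjoint_def is_adjoint_def proj0_SS)
qed

lemma smult_proj0: "smult proj0 proj0 = proj0"
  by (simp add: smult_def proj0_def fun_eq_iff)

lemma op_norm_proj0: "op_norm m proj0 = 1"
proof (rule antisym)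
  show "op_norm m proj0 \<le> 1"
    by (rule op_norm_least)
       (auto simp: dual_ball_def s_norm_proj0 intro: order_trans[OF norm_first_le_sd_norm])
  have "unit0 \<in> dual_ball m"
    by (simp add: dual_ball_def sd_fin_unit0 sd_norm_unit0 sd_fin_imp_sd_space)
  from s_norm_le_op_norm[OF proj0_SS this]
  show "1 \<le> op_norm m proj0" by (simp add: s_norm_proj0 unit0_def)
qed

lemma nonzero_proj0: "nonzero_op proj0"
  unfolding nonzero_op_def
  by (rule bexI[OF _ sd_fin_imp_sd_space[OF sd_fin_unit0]])
    (auto simp: proj0_def unit0_def fun_eq_iff)

theorem proposition2p1:
  fixes n :: nat
  assumes "n \<ge> 1"
  shows
    "(\<forall>x. positive x \<longrightarrow>
        op_norm n x = Sup {Re (pair (x \<xi>) \<xi>) | \<xi>. \<xi> \<in> sd_space \<and> sd_fin n \<xi> \<and> sd_norm n \<xi> \<le> 1})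
   \<and> (\<forall>x. self_adjoint x \<longrightarrow> (op_norm n x)\<^sup>2 \<le> op_norm (2 * n) (smult x x))
   \<and> (\<forall>x y. x \<in> SS \<and> is_adjoint y x \<longrightarrow>
        (op_norm n x)\<^sup>2 \<le> sqrt (op_norm (2 * n) (smult y x)) * sqrt (op_norm (2 * n) (smult x y)))
   \<and> (\<exists>x. self_adjoint x \<and> nonzero_op x \<and> (op_norm n x)\<^sup>2 = op_norm (2 * n) (smult x x))
   \<and> (\<exists>x y. x \<in> SS \<and> is_adjoint y x \<and> nonzero_op x \<and>
        (op_norm n x)\<^sup>2 = sqrt (op_norm (2 * n) (smult y x)) * sqrt (op_norm (2 * n) (smult x y)))"
proof (intro conjI allI impI)
  fix x assume "positive x"
  then obtain y z where y: "y \<in> SS" and adj: "is_adjoint z y"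
    and x: "\<And>\<xi>. \<xi> \<in> sd_space \<Longrightarrow> x \<xi> = smult z y \<xi>"
    by (auto simp: positive_def)
  have "op_norm n x = op_norm n (smult z y)" by (rule op_norm_cong[OF x])
  also have "\<dots> = Sup ((\<lambda>\<xi>. Re (pair (x \<xi>) \<xi>)) ` dual_ball n)"
    unfolding op_norm_adjoint_mult[OF y adj]
    by (rule arg_cong[where f = Sup]) (auto simp: dual_ball_def x)
  finally show "op_norm n x
      = Sup {Re (pair (x \<xi>) \<xi>) | \<xi>. \<xi> \<in> sd_space \<and> sd_fin n \<xi> \<and> sd_norm n \<xi> \<le> 1}"
    by (simp add: dual_ball_def setcompr_eq_image)
next
  fix x assume "self_adjoint x"
  then have x: "x \<in> SS" "is_adjoint x x" by (simp_all add: self_adjoint_def)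
  show "(op_norm n x)\<^sup>2 \<le> op_norm (2 * n) (smult x x)"
    using op_norm_power2_le[OF x] op_norm_nonneg[OF smult_SS[OF x(1) x(1)]] by simp
next
  fix x y assume "x \<in> SS \<and> is_adjoint y x"
  then show "(op_norm n x)\<^sup>2
      \<le> sqrt (op_norm (2 * n) (smult y x)) * sqrt (op_norm (2 * n) (smult x y))"
    by (blast intro: op_norm_power2_le)
next
  show "\<exists>x. self_adjoint x \<and> nonzero_op x \<and> (op_norm n x)\<^sup>2 = op_norm (2 * n) (smult x x)"
    using self_adjoint_proj0 nonzero_proj0 by (auto simp: smult_proj0 op_norm_proj0)
  show "\<exists>x y. x \<in> SS \<and> is_adjoint y x \<and> nonzero_op x \<and>
      (op_norm n x)\<^sup>2 = sqrt (op_norm (2 * n) (smult y x)) * sqrt (op_norm (2 * n) (smult x y))"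
    using self_adjoint_proj0 nonzero_proj0
    by (intro exI[of _ proj0]) (simp add: self_adjoint_def smult_proj0 op_norm_proj0)
qed

end
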